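(* Let $Q$ be a quiver whose underlying unoriented graph is a tree, and let $\mathbb V$ be an indecomposable representation of $Q$ over $\mathbb{F}_1$. Then every entry of the dimension vector $(\dim V_i)_{i\in I}$ is $0$ or $1$, the set of vertices $i$ with $\dim V_i=1$ spans a connected subgraph of $Q$, and every edge map between two one-dimensional spaces is an isomorphism. Consequently indecomposable representations of $Q$ (up to isomorphism) correspond bijectively to nonempty connected subgraphs of $Q$.
   Context: $\mathrm{Vect}_{\mathbb{F}_1}$: finite pointed sets $(V,0_V)$ with pointed maps injective on the complement of the preimage of the base point; $\dim V=|V|-1$; $V\oplus W$ is $V\sqcup W$ with base points identified. A representation $\mathbb V=(V_i,f_h)$ of a quiver $Q$ (vertices $I$, edges $E$, $h'$/$h''$ source/target) over $\mathbb{F}_1$ consists of $V_i\in\mathrm{Vect}_{\mathbb{F}_1}$ and morphisms $f_h:V_{h'}\to V_{h''}$; direct sums are vertexwise; $\mathbb V$ is indecomposable if nonzero and not a direct sum of two nonzero representations. A quiver is a tree if its underlying unoriented graph contains no cycles and no multiple edges. The dimension vector of $\mathbb V$ is $(\dim V_i)_{i\in I}$. *)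

theory Defs
  imports Main
begin

text \<open>An object of Vect_F1 is a finite set V (a subset of some ambient type) with a
base point z in V. Its dimension is |V| - 1.\<close>

definition f1_space :: "'a set \<Rightarrow> 'a \<Rightarrow> bool" where
  "f1_space V z \<longleftrightarrow> finite V \<and> z \<in> V"

definition f1_dim :: "'a set \<Rightarrow> nat" where
  "f1_dim V = card V - 1"

definition f1_morph :: "'a set \<Rightarrow> 'a \<Rightarrow> 'b set \<Rightarrow> 'b \<Rightarrow> ('a \<Rightarrow> 'b) \<Rightarrow> bool" where
  "f1_morph V z W w f \<longleftrightarrow> f ` V \<subseteq> W \<and> f z = w \<and> inj_on f (V - f -` {w})"

text \<open>An isomorphism in Vect_F1: a bijective morphism (its inverse is then
automatically a morphism).\<close>

definition f1_iso :: "'a set \<Rightarrow> 'a \<Rightarrow> 'b set \<Rightarrow> 'b \<Rightarrow> ('a \<Rightarrow> 'b) \<Rightarrow> bool" where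
  "f1_iso V z W w f \<longleftrightarrow> f1_morph V z W w f \<and> bij_betw f V W"

definition quiver :: "'v set \<Rightarrow> 'e set \<Rightarrow> ('e \<Rightarrow> 'v) \<Rightarrow> ('e \<Rightarrow> 'v) \<Rightarrow> bool" where
  "quiver I E src tgt \<longleftrightarrow> finite I \<and> finite E \<and> (\<forall>h\<in>E. src h \<in> I \<and> tgt h \<in> I)"

text \<open>A cycle in the underlying unoriented (multi)graph: distinct edges e_0..e_(n-1),
n >= 1, and distinct vertices v_0..v_(n-1) such that e_k joins v_k and v_(k+1 mod n).
(Loops are cycles of length 1, a pair of parallel edges a cycle of length 2.)\<close>

definition unoriented_cycle ::
  "'e set \<Rightarrow> ('e \<Rightarrow> 'v) \<Rightarrow> ('e \<Rightarrow> 'v) \<Rightarrow> 'v list \<Rightarrow> 'e list \<Rightarrow> bool" where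
  "unoriented_cycle E src tgt vs es \<longleftrightarrow>
     length es \<ge> 1 \<and> length vs = length es \<and> distinct es \<and> distinct vs \<and> set es \<subseteq> E \<and>
     (\<forall>k < length es. {src (es ! k), tgt (es ! k)} = {vs ! k, vs ! ((k + 1) mod length es)})"

definition no_multiple_edges :: "'e set \<Rightarrow> ('e \<Rightarrow> 'v) \<Rightarrow> ('e \<Rightarrow> 'v) \<Rightarrow> bool" where
  "no_multiple_edges E src tgt \<longleftrightarrow>
     (\<forall>h\<in>E. \<forall>h'\<in>E. {src h, tgt h} = {src h', tgt h'} \<longrightarrow> h = h')"

definition tree_quiver :: "'v set \<Rightarrow> 'e set \<Rightarrow> ('e \<Rightarrow> 'v) \<Rightarrow> ('e \<Rightarrow> 'v) \<Rightarrow> bool" where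
  "tree_quiver I E src tgt \<longleftrightarrow> quiver I E src tgt \<and>
     (\<nexists>vs es. unoriented_cycle E src tgt vs es) \<and> no_multiple_edges E src tgt"

definition adj_in :: "'e set \<Rightarrow> ('e \<Rightarrow> 'v) \<Rightarrow> ('e \<Rightarrow> 'v) \<Rightarrow> 'v set \<Rightarrow> 'v \<Rightarrow> 'v \<Rightarrow> bool" where
  "adj_in E src tgt S u v \<longleftrightarrow> u \<in> S \<and> v \<in> S \<and>
     (\<exists>h\<in>E. (src h = u \<and> tgt h = v) \<or> (src h = v \<and> tgt h = u))"

definition connected_in :: "'e set \<Rightarrow> ('e \<Rightarrow> 'v) \<Rightarrow> ('e \<Rightarrow> 'v) \<Rightarrow> 'v set \<Rightarrow> bool" where
  "connected_in E src tgt S \<longleftrightarrow> (\<forall>u\<in>S. \<forall>v\<in>S. (adj_in E src tgt S)\<^sup>*\<^sup>* u v)"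

record ('v, 'e, 'a) rep =
  sp :: "'v \<Rightarrow> 'a set"
  bp :: "'v \<Rightarrow> 'a"
  mp :: "'e \<Rightarrow> 'a \<Rightarrow> 'a"

definition is_rep :: "'v set \<Rightarrow> 'e set \<Rightarrow> ('e \<Rightarrow> 'v) \<Rightarrow> ('e \<Rightarrow> 'v) \<Rightarrow> ('v, 'e, 'a) rep \<Rightarrow> bool" where
  "is_rep I E src tgt R \<longleftrightarrow>
     (\<forall>i\<in>I. f1_space (sp R i) (bp R i)) \<and>
     (\<forall>h\<in>E. f1_morph (sp R (src h)) (bp R (src h)) (sp R (tgt h)) (bp R (tgt h)) (mp R h))"

definition rep_nonzero :: "'v set \<Rightarrow> ('v, 'e, 'a) rep \<Rightarrow> bool" where
  "rep_nonzero I R \<longleftrightarrow> (\<exists>i\<in>I. f1_dim (sp R i) \<noteq> 0)"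

text \<open>R is the (internal) direct sum of the subrepresentations U and W: vertexwise
V_i = U_i \<or> W_i with base points identified, U_i \<inter> W_i = {0}, and the maps of U and W
are the restrictions of those of R.\<close>

definition is_direct_sum ::
  "'v set \<Rightarrow> 'e set \<Rightarrow> ('e \<Rightarrow> 'v) \<Rightarrow> ('e \<Rightarrow> 'v) \<Rightarrow>
   ('v, 'e, 'a) rep \<Rightarrow> ('v, 'e, 'a) rep \<Rightarrow> ('v, 'e, 'a) rep \<Rightarrow> bool" where
  "is_direct_sum I E src tgt R U W \<longleftrightarrow>
     is_rep I E src tgt U \<and> is_rep I E src tgt W \<and>
     (\<forall>i\<in>I. sp U i \<union> sp W i = sp R i \<and> sp U i \<inter> sp W i = {bp R i} \<and>
            bp U i = bp R i \<and> bp W i = bp R i) \<and>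
     (\<forall>h\<in>E. (\<forall>x\<in>sp U (src h). mp U h x = mp R h x) \<and>
            (\<forall>x\<in>sp W (src h). mp W h x = mp R h x))"

definition indecomposable ::
  "'v set \<Rightarrow> 'e set \<Rightarrow> ('e \<Rightarrow> 'v) \<Rightarrow> ('e \<Rightarrow> 'v) \<Rightarrow> ('v, 'e, 'a) rep \<Rightarrow> bool" where
  "indecomposable I E src tgt R \<longleftrightarrow> is_rep I E src tgt R \<and> rep_nonzero I R \<and>
     \<not> (\<exists>U W. rep_nonzero I U \<and> rep_nonzero I W \<and> is_direct_sum I E src tgt R U W)"

definition rep_iso ::
  "'v set \<Rightarrow> 'e set \<Rightarrow> ('e \<Rightarrow> 'v) \<Rightarrow> ('e \<Rightarrow> 'v) \<Rightarrow> ('v, 'e, 'a) rep \<Rightarrow> ('v, 'e, 'b) rep \<Rightarrow> bool" where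
  "rep_iso I E src tgt R R' \<longleftrightarrow>
     (\<exists>\<phi> :: 'v \<Rightarrow> 'a \<Rightarrow> 'b.
        (\<forall>i\<in>I. f1_iso (sp R i) (bp R i) (sp R' i) (bp R' i) (\<phi> i)) \<and>
        (\<forall>h\<in>E. \<forall>x\<in>sp R (src h). \<phi> (tgt h) (mp R h x) = mp R' h (\<phi> (src h) x)))"

definition dim_one_support :: "'v set \<Rightarrow> ('v, 'e, 'a) rep \<Rightarrow> 'v set" where
  "dim_one_support I R = {i \<in> I. f1_dim (sp R i) = 1}"

end

theory Submission
  imports Defs
begin

(* The proof works with the coefficient graph of a representation R: its nodes are the
   pairs (i, x) with x a nonzero element of V_i, and (i, x), (j, y) are linked along an edge
   h from i to j when f_h x = y.
   (1) Every union of connected components of this graph spans a subrepresentation, so an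
       indecomposable R has a connected coefficient graph.
   (2) Since f_h is a function, injective away from the preimage of 0, a simple path in the
       coefficient graph projects to a walk in Q that never immediately retraces an edge.
       In a tree such a walk cannot be closed, because a closed non-backtracking walk
       contains a cycle.
   From (1) and (2): two distinct nonzero elements of one V_i would give a closed
   non-backtracking walk, so dim V_i <= 1; and an edge map between one-dimensional spaces
   killing the nonzero element would close up a walk with that edge.  Hence R is determined
   by its support S, which is connected, so two indecomposables with equal supports are
   isomorphic; conversely the representation with F1 (= {False, True}) on S and identity
   maps inside S is indecomposable, since a direct sum decomposition cannot split a
   connected component of the coefficient graph. *)

section \<open>Simple paths of a relation\<close>

lemma rtranclp_path:
  assumes "r\<^sup>*\<^sup>* a b"
  obtains n p where "p 0 = a" "p n = b" "\<forall>m<n. r (p m) (p (Suc m))"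
proof -
  have "\<exists>n p. p 0 = a \<and> p n = b \<and> (\<forall>m<n. r (p m) (p (Suc m)))"
    using assms
  proof (induction rule: rtranclp_induct)
    case base
    show ?case by (rule exI[of _ 0], rule exI[of _ "\<lambda>_. a"]) simp
  next
    case (step b c)
    then obtain n p where p: "p 0 = a" "p n = b" "\<forall>m<n. r (p m) (p (Suc m))" by blast
    then have "\<forall>m<Suc n. r ((p(Suc n := c)) m) ((p(Suc n := c)) (Suc m))"
      using step(2) by (auto simp: less_Suc_eq)
    then show ?case using p(1) by (intro exI[of _ "Suc n"] exI[of _ "p(Suc n := c)"]) simp
  qed
  then show ?thesis using that by blast
qed

text \<open>Cutting out the loop between two visits of the same point shortens a path; hence any
  two related points are joined by a path without repeated points.\<close>

lemma simple_path:
  assumes "p 0 = a" "p n = b" "\<forall>m<n. r (p m) (p (Suc m))"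
  shows "\<exists>n p. p 0 = a \<and> p n = b \<and> (\<forall>m<n. r (p m) (p (Suc m))) \<and> inj_on p {0..n}"
  using assms
proof (induction n arbitrary: p rule: less_induct)
  case (less n)
  show ?case
  proof (cases "inj_on p {0..n}")
    case True
    then show ?thesis using less.prems by blast
  next
    case False
    then obtain i j where ij: "i < j" "j \<le> n" "p i = p j"
      unfolding inj_on_def by (metis atLeastAtMost_iff nat_neq_iff)
    define q where "q m = (if m \<le> i then p m else p (m + (j - i)))" for m
    have "q 0 = a" using less.prems by (simp add: q_def)
    moreover have "q (n - (j - i)) = b"
      using less.prems ij by (cases "j = n") (auto simp: q_def)
    moreover have "r (q m) (q (Suc m))" if m: "m < n - (j - i)" for m
    proof (cases "m < i")
      case True
      then show ?thesis using less.prems(3) m ij by (auto simp: q_def)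
    next
      case False
      then have "q m = p (m + (j - i))" "q (Suc m) = p (Suc (m + (j - i)))"
        using ij by (auto simp: q_def)
      then show ?thesis using less.prems(3) m ij by auto
    qed
    ultimately show ?thesis
      using less.IH[of "n - (j - i)" q] ij by auto
  qed
qed

lemma rtranclp_simple_path:
  assumes "r\<^sup>*\<^sup>* a b"
  obtains n p where "p 0 = a" "p n = b" "\<forall>m<n. r (p m) (p (Suc m))" "inj_on p {0..n}"
proof -
  obtain n p where "p 0 = a" "p n = b" "\<forall>m<n. r (p m) (p (Suc m))"
    by (rule rtranclp_path[OF assms])
  then have "\<exists>n p. p 0 = a \<and> p n = b \<and> (\<forall>m<n. r (p m) (p (Suc m))) \<and> inj_on p {0..n}"
    by (rule simple_path)
  then show ?thesis using that by blast
qed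

section \<open>Non-backtracking walks in the underlying graph\<close>

definition nb_walk ::
  "'e set \<Rightarrow> ('e \<Rightarrow> 'v) \<Rightarrow> ('e \<Rightarrow> 'v) \<Rightarrow> nat \<Rightarrow> (nat \<Rightarrow> 'v) \<Rightarrow> (nat \<Rightarrow> 'e) \<Rightarrow> bool" where
  "nb_walk E src tgt n v e \<longleftrightarrow>
     (\<forall>m<n. e m \<in> E \<and> {src (e m), tgt (e m)} = {v m, v (Suc m)}) \<and>
     (\<forall>m. Suc m < n \<longrightarrow> e m \<noteq> e (Suc m))"

text \<open>A closed non-backtracking walk contains a cycle: either its vertices are distinct, and
  then it is a cycle itself, or it has a shorter closed subwalk between two visits of the
  same vertex.\<close>

lemma closed_nb_walk_cycle:
  assumes "nb_walk E src tgt n v e" and "1 \<le> n" and "v n = v 0"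
  shows "\<exists>vs es. unoriented_cycle E src tgt vs es"
  using assms
proof (induction n arbitrary: v e rule: less_induct)
  case (less n)
  have edge: "e m \<in> E" "{src (e m), tgt (e m)} = {v m, v (Suc m)}" if "m < n" for m
    using less.prems(1) that unfolding nb_walk_def by auto
  have nonback: "e m \<noteq> e (Suc m)" if "Suc m < n" for m
    using less.prems(1) that unfolding nb_walk_def by auto
  show ?case
  proof (cases "inj_on v {0..<n}")
    case True
    have v_inj: "x = y" if "x < n" "y < n" "v x = v y" for x y
      using True that by (auto dest: inj_onD)
    have no_repeat: False if ab: "a < b" "b < n" "e a = e b" for a b
    proof -
      have "{v a, v (Suc a)} = {v b, v (Suc b)}" using edge(2)[of a] edge(2)[of b] ab by simp
      moreover have "v a \<noteq> v b" using v_inj[of a b] ab by auto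
      ultimately have 1: "v a = v (Suc b)" and 2: "v (Suc a) = v b" by (metis doubleton_eq_iff)+
      have "Suc a = b" using 2 v_inj[of "Suc a" b] ab by auto
      have "Suc b = n"
      proof (rule ccontr)
        assume "Suc b \<noteq> n"
        then have "a = Suc b" using 1 v_inj[of a "Suc b"] ab by auto
        then show False using ab by simp
      qed
      then have "a = 0" using 1 less.prems(3) v_inj[of a 0] ab by auto
      then show False using nonback[of a] ab \<open>Suc a = b\<close> \<open>Suc b = n\<close> by auto
    qed
    have e_inj: "inj_on e {0..<n}"
      by (rule inj_onI) (metis atLeastLessThan_iff nat_neq_iff no_repeat)
    have "unoriented_cycle E src tgt (map v [0..<n]) (map e [0..<n])"
      unfolding unoriented_cycle_def
    proof (intro conjI allI impI)
      fix k assume "k < length (map e [0..<n])"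
      then have k: "k < n" by simp
      have "v ((k + 1) mod n) = v (Suc k)"
      proof (cases "Suc k < n")
        case False
        then have "Suc k = n" using k by simp
        then show ?thesis using less.prems(3) by simp
      qed simp
      then show "{src (map e [0..<n] ! k), tgt (map e [0..<n] ! k)} =
          {map v [0..<n] ! k, map v [0..<n] ! ((k + 1) mod length (map e [0..<n]))}"
        using k edge(2) by simp
    qed (use less.prems(2) True e_inj edge(1) in \<open>auto simp: distinct_map\<close>)
    then show ?thesis by blast
  next
    case False
    then obtain a b where ab: "a < b" "b < n" "v a = v b"
      unfolding inj_on_def by (metis atLeastLessThan_iff nat_neq_iff)
    have "nb_walk E src tgt (b - a) (\<lambda>m. v (a + m)) (\<lambda>m. e (a + m))"
      unfolding nb_walk_def using ab edge nonback by auto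
    then show ?thesis
      using less.IH[of "b - a"] ab by simp
  qed
qed

lemma tree_nb_walk_not_closed:
  assumes "tree_quiver I E src tgt" and "nb_walk E src tgt n v e" and "1 \<le> n"
  shows "v n \<noteq> v 0"
  using closed_nb_walk_cycle[OF assms(2,3)] assms(1) unfolding tree_quiver_def by blast

lemma tree_no_loop:
  assumes "tree_quiver I E src tgt" and "h \<in> E"
  shows "src h \<noteq> tgt h"
proof
  assume "src h = tgt h"
  then have "unoriented_cycle E src tgt [src h] [h]"
    using assms(2) unfolding unoriented_cycle_def by auto
  then show False using assms(1) unfolding tree_quiver_def by blast
qed

lemma nb_walk_snoc:
  assumes walk: "nb_walk E src tgt n v e" and h: "h \<in> E" and ends: "{src h, tgt h} = {v n, w}"
    and turn: "0 < n \<Longrightarrow> e (n - 1) \<noteq> h"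
  shows "nb_walk E src tgt (Suc n) (v(Suc n := w)) (e(n := h))"
proof -
  let ?v = "v(Suc n := w)" and ?e = "e(n := h)"
  have "?e m \<in> E \<and> {src (?e m), tgt (?e m)} = {?v m, ?v (Suc m)}" if "m < Suc n" for m
    using walk h ends that unfolding nb_walk_def by (cases "m = n") auto
  moreover have "?e m \<noteq> ?e (Suc m)" if "Suc m < Suc n" for m
    using walk turn that unfolding nb_walk_def by (cases "Suc m = n") auto
  ultimately show ?thesis unfolding nb_walk_def by blast
qed

lemma f1_dim_nonzero_iff:
  assumes "finite A" and "z \<in> A"
  shows "f1_dim A \<noteq> 0 \<longleftrightarrow> (\<exists>x\<in>A. x \<noteq> z)"
  using assms card_le_Suc0_iff_eq[OF assms(1)] unfolding f1_dim_def by (auto, metis)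

section \<open>The coefficient graph of a representation\<close>

definition nonzero_elems :: "'v set \<Rightarrow> ('v, 'e, 'a) rep \<Rightarrow> ('v \<times> 'a) set" where
  "nonzero_elems I R = {(i, x). i \<in> I \<and> x \<in> sp R i \<and> x \<noteq> bp R i}"

definition coeff_link ::
  "('e \<Rightarrow> 'v) \<Rightarrow> ('e \<Rightarrow> 'v) \<Rightarrow> ('v, 'e, 'a) rep \<Rightarrow> 'e \<Rightarrow> 'v \<times> 'a \<Rightarrow> 'v \<times> 'a \<Rightarrow> bool" where
  "coeff_link src tgt R h a b \<longleftrightarrow>
     (fst a = src h \<and> fst b = tgt h \<and> mp R h (snd a) = snd b) \<or>
     (fst b = src h \<and> fst a = tgt h \<and> mp R h (snd b) = snd a)"

definition coeff_adj ::
  "'v set \<Rightarrow> 'e set \<Rightarrow> ('e \<Rightarrow> 'v) \<Rightarrow> ('e \<Rightarrow> 'v) \<Rightarrow> ('v, 'e, 'a) rep \<Rightarrow> 'v \<times> 'a \<Rightarrow> 'v \<times> 'a \<Rightarrow> bool"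
  where
  "coeff_adj I E src tgt R a b \<longleftrightarrow>
     a \<in> nonzero_elems I R \<and> b \<in> nonzero_elems I R \<and> (\<exists>h\<in>E. coeff_link src tgt R h a b)"

lemma coeff_adj_sym: "coeff_adj I E src tgt R a b \<Longrightarrow> coeff_adj I E src tgt R b a"
  unfolding coeff_adj_def coeff_link_def by blast

lemma coeff_link_edge: "coeff_link src tgt R h a b \<Longrightarrow> {src h, tgt h} = {fst a, fst b}"
  unfolding coeff_link_def by auto

text \<open>Two links along the same non-loop edge out of one nonzero element end in the same
  element: f_h is a function, and it is injective on the elements it does not kill.\<close>

lemma coeff_no_backtrack:
  assumes rep: "is_rep I E src tgt R" and h: "h \<in> E" and no_loop: "src h \<noteq> tgt h"
    and nonzero: "a \<in> nonzero_elems I R" "b \<in> nonzero_elems I R" "c \<in> nonzero_elems I R"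
    and ab: "coeff_link src tgt R h a b" and bc: "coeff_link src tgt R h b c"
  shows "a = c"
proof (cases "fst a = src h \<and> fst b = tgt h \<and> mp R h (snd a) = snd b")
  case True
  then have c: "fst c = src h" "mp R h (snd c) = snd b"
    using bc no_loop unfolding coeff_link_def by auto
  have "inj_on (mp R h) (sp R (src h) - mp R h -` {bp R (tgt h)})"
    using rep h unfolding is_rep_def f1_morph_def by blast
  then have "snd a = snd c"
    using nonzero True c unfolding nonzero_elems_def by (auto simp: inj_on_def)
  then show ?thesis using True c by (simp add: prod_eq_iff)
next
  case False
  then have "fst b = src h" "fst a = tgt h" "mp R h (snd b) = snd a"
    using ab unfolding coeff_link_def by auto
  moreover have "fst c = tgt h" "mp R h (snd b) = snd c"
    using bc no_loop \<open>fst b = src h\<close> unfolding coeff_link_def by auto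
  ultimately show ?thesis by (simp add: prod_eq_iff)
qed

lemma coeff_path_projects:
  assumes rep: "is_rep I E src tgt R" and loopless: "\<forall>h\<in>E. src h \<noteq> tgt h"
    and path: "\<forall>m<n. coeff_adj I E src tgt R (p m) (p (Suc m))" and inj: "inj_on p {0..n}"
  obtains e where "\<forall>m<n. e m \<in> E \<and> coeff_link src tgt R (e m) (p m) (p (Suc m))"
    and "nb_walk E src tgt n (\<lambda>m. fst (p m)) e"
proof -
  define e where "e m = (SOME h. h \<in> E \<and> coeff_link src tgt R h (p m) (p (Suc m)))" for m
  have link: "e m \<in> E \<and> coeff_link src tgt R (e m) (p m) (p (Suc m))" if "m < n" for m
    unfolding e_def by (rule someI_ex) (use path that in \<open>auto simp: coeff_adj_def\<close>)
  have nonback: "e m \<noteq> e (Suc m)" if m: "Suc m < n" for m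
  proof
    assume same: "e m = e (Suc m)"
    have "coeff_adj I E src tgt R (p m) (p (Suc m))" "coeff_adj I E src tgt R (p (Suc m)) (p (Suc (Suc m)))"
      using path m by simp_all
    moreover have "coeff_link src tgt R (e m) (p m) (p (Suc m))"
      "coeff_link src tgt R (e m) (p (Suc m)) (p (Suc (Suc m)))" "e m \<in> E"
      using link[of m] link[of "Suc m"] m same by simp_all
    ultimately have "p m = p (Suc (Suc m))"
      using coeff_no_backtrack[OF rep] loopless unfolding coeff_adj_def by blast
    then show False using inj m by (auto dest: inj_onD)
  qed
  have "{src (e m), tgt (e m)} = {fst (p m), fst (p (Suc m))}" if "m < n" for m
    by (rule coeff_link_edge) (use link[OF that] in blast)
  then have "nb_walk E src tgt n (\<lambda>m. fst (p m)) e"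
    using link nonback unfolding nb_walk_def by simp
  then show ?thesis using that link by blast
qed

section \<open>Splitting a representation along the coefficient graph\<close>

definition restrict_rep :: "('v, 'e, 'a) rep \<Rightarrow> ('v \<times> 'a \<Rightarrow> bool) \<Rightarrow> ('v, 'e, 'a) rep" where
  "restrict_rep R P = \<lparr>sp = (\<lambda>i. {x \<in> sp R i. x = bp R i \<or> P (i, x)}), bp = bp R, mp = mp R\<rparr>"

lemma restrict_rep_is_rep:
  assumes rep: "is_rep I E src tgt R" and quiv: "quiver I E src tgt"
    and closed: "\<And>a b. P a \<Longrightarrow> coeff_adj I E src tgt R a b \<Longrightarrow> P b"
  shows "is_rep I E src tgt (restrict_rep R P)"
  unfolding is_rep_def f1_space_def f1_morph_def
proof (intro conjI ballI)
  fix i assume "i \<in> I"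
  then show "finite (sp (restrict_rep R P) i)" "bp (restrict_rep R P) i \<in> sp (restrict_rep R P) i"
    using rep unfolding is_rep_def f1_space_def restrict_rep_def by auto
next
  fix h assume h: "h \<in> E"
  have mo: "mp R h ` sp R (src h) \<subseteq> sp R (tgt h)" "mp R h (bp R (src h)) = bp R (tgt h)"
    "inj_on (mp R h) (sp R (src h) - mp R h -` {bp R (tgt h)})"
    using rep h unfolding is_rep_def f1_morph_def by blast+
  have ends: "src h \<in> I" "tgt h \<in> I" using quiv h unfolding quiver_def by auto
  show "mp (restrict_rep R P) h (bp (restrict_rep R P) (src h)) = bp (restrict_rep R P) (tgt h)"
    using mo by (simp add: restrict_rep_def)
  show "inj_on (mp (restrict_rep R P) h)
      (sp (restrict_rep R P) (src h) - mp (restrict_rep R P) h -` {bp (restrict_rep R P) (tgt h)})"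
    by (simp add: restrict_rep_def) (rule inj_on_subset[OF mo(3)]; auto)
  show "mp (restrict_rep R P) h ` sp (restrict_rep R P) (src h) \<subseteq> sp (restrict_rep R P) (tgt h)"
  proof
    fix y assume "y \<in> mp (restrict_rep R P) h ` sp (restrict_rep R P) (src h)"
    then obtain x where x: "x \<in> sp R (src h)" "x = bp R (src h) \<or> P (src h, x)" "y = mp R h x"
      by (auto simp: restrict_rep_def)
    have "P (tgt h, y)" if "y \<noteq> bp R (tgt h)"
    proof (rule closed)
      show "P (src h, x)" using x that mo(2) by auto
      show "coeff_adj I E src tgt R (src h, x) (tgt h, y)"
        using h ends x that mo unfolding coeff_adj_def coeff_link_def nonzero_elems_def by auto
    qed
    then show "y \<in> sp (restrict_rep R P) (tgt h)"
      using mo(1) x by (auto simp: restrict_rep_def)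
  qed
qed

lemma restrict_rep_direct_sum:
  assumes "is_rep I E src tgt R"
    and "is_rep I E src tgt (restrict_rep R P)" and "is_rep I E src tgt (restrict_rep R (\<lambda>a. \<not> P a))"
  shows "is_direct_sum I E src tgt R (restrict_rep R P) (restrict_rep R (\<lambda>a. \<not> P a))"
  using assms unfolding is_direct_sum_def is_rep_def f1_space_def
  by (auto simp: restrict_rep_def)

lemma restrict_rep_nonzero:
  assumes "is_rep I E src tgt R" and "a \<in> nonzero_elems I R" and "P a"
  shows "rep_nonzero I (restrict_rep R P)"
proof -
  obtain i x where a: "a = (i, x)" "i \<in> I" "x \<in> sp R i" "x \<noteq> bp R i"
    using assms(2) unfolding nonzero_elems_def by auto
  then have "finite (sp R i)" "bp R i \<in> sp R i"
    using assms(1) unfolding is_rep_def f1_space_def by auto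
  then have "f1_dim (sp (restrict_rep R P) i) \<noteq> 0"
    using a assms(3) f1_dim_nonzero_iff[of "sp (restrict_rep R P) i" "bp R i"]
    by (auto simp: restrict_rep_def)
  then show ?thesis using a(2) unfolding rep_nonzero_def by blast
qed

text \<open>Indecomposability forces the coefficient graph to be connected: otherwise the
  component of one nonzero element and the rest give a nontrivial splitting.\<close>

lemma indecomposable_coeff_connected:
  assumes ind: "indecomposable I E src tgt R" and quiv: "quiver I E src tgt"
    and a: "a \<in> nonzero_elems I R" and b: "b \<in> nonzero_elems I R"
  shows "(coeff_adj I E src tgt R)\<^sup>*\<^sup>* a b"
proof (rule ccontr)
  assume not_joined: "\<not> (coeff_adj I E src tgt R)\<^sup>*\<^sup>* a b"
  define C where "C = (coeff_adj I E src tgt R)\<^sup>*\<^sup>* a"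
  have rep: "is_rep I E src tgt R" using ind unfolding indecomposable_def by blast
  have C_closed: "C d" if "C c" "coeff_adj I E src tgt R c d" for c d
    using that unfolding C_def by (rule rtranclp.rtrancl_into_rtrancl)
  have not_C_closed: "\<not> C d" if "\<not> C c" "coeff_adj I E src tgt R c d" for c d
    using that C_closed coeff_adj_sym by blast
  have "is_direct_sum I E src tgt R (restrict_rep R C) (restrict_rep R (\<lambda>c. \<not> C c))"
    using restrict_rep_is_rep[OF rep quiv C_closed] restrict_rep_is_rep[OF rep quiv not_C_closed]
    by (rule restrict_rep_direct_sum[OF rep])
  moreover have "rep_nonzero I (restrict_rep R C)"
    using restrict_rep_nonzero[OF rep a] unfolding C_def by simp
  moreover have "rep_nonzero I (restrict_rep R (\<lambda>c. \<not> C c))"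
    using restrict_rep_nonzero[OF rep b] not_joined unfolding C_def by simp
  ultimately show False using ind unfolding indecomposable_def by blast
qed

lemma direct_sum_adj_closed:
  assumes ds: "is_direct_sum I E src tgt R U W"
    and adj: "coeff_adj I E src tgt R a b" and in_U: "snd a \<in> sp U (fst a)"
  shows "snd b \<in> sp U (fst b)"
proof -
  obtain h where h: "h \<in> E" "coeff_link src tgt R h a b"
    and nonzero: "a \<in> nonzero_elems I R" "b \<in> nonzero_elems I R"
    using adj unfolding coeff_adj_def by blast
  have repU: "is_rep I E src tgt U" and repW: "is_rep I E src tgt W"
    using ds unfolding is_direct_sum_def by blast+
  have parts: "sp U i \<union> sp W i = sp R i" "sp U i \<inter> sp W i = {bp R i}" if "i \<in> I" for i
    using ds that unfolding is_direct_sum_def by blast+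
  have restr_U: "mp U h x = mp R h x" if "x \<in> sp U (src h)" for x
    using ds h(1) that unfolding is_direct_sum_def by blast
  have restr_W: "mp W h x = mp R h x" if "x \<in> sp W (src h)" for x
    using ds h(1) that unfolding is_direct_sum_def by blast
  show ?thesis
  proof (cases "fst a = src h \<and> fst b = tgt h \<and> mp R h (snd a) = snd b")
    case True
    then show ?thesis
      using repU h(1) in_U restr_U unfolding is_rep_def f1_morph_def by force
  next
    case False
    then have ba: "fst b = src h" "fst a = tgt h" "mp R h (snd b) = snd a"
      using h(2) unfolding coeff_link_def by auto
    show ?thesis
    proof (rule ccontr)
      assume "snd b \<notin> sp U (fst b)"
      moreover have "fst b \<in> I" "snd b \<in> sp R (fst b)"
        using nonzero(2) unfolding nonzero_elems_def by auto
      ultimately have "snd b \<in> sp W (src h)"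
        using parts(1)[of "fst b"] ba(1) by auto
      then have "snd a \<in> sp W (fst a)"
        using repW h(1) restr_W ba unfolding is_rep_def f1_morph_def by force
      moreover have "fst a \<in> I" "snd a \<noteq> bp R (fst a)"
        using nonzero(1) unfolding nonzero_elems_def by auto
      ultimately show False
        using in_U parts(2)[of "fst a"] by auto
    qed
  qed
qed

lemma direct_sum_commute:
  "is_direct_sum I E src tgt R U W \<Longrightarrow> is_direct_sum I E src tgt R W U"
  unfolding is_direct_sum_def by blast

lemma direct_sum_nonzero_elem:
  assumes ds: "is_direct_sum I E src tgt R U W" and "rep_nonzero I U"
  obtains i x where "i \<in> I" "x \<in> sp U i" "x \<noteq> bp R i"
proof -
  obtain i where i: "i \<in> I" "f1_dim (sp U i) \<noteq> 0"
    using assms(2) unfolding rep_nonzero_def by blast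
  have "finite (sp U i)" "bp R i \<in> sp U i"
    using ds i(1) unfolding is_direct_sum_def is_rep_def f1_space_def by metis+
  then show ?thesis using that i f1_dim_nonzero_iff by metis
qed

section \<open>Structure of an indecomposable representation of a tree quiver\<close>

definition nz_elem :: "('v, 'e, 'a) rep \<Rightarrow> 'v \<Rightarrow> 'a" where
  "nz_elem R i = (SOME x. x \<in> sp R i \<and> x \<noteq> bp R i)"

locale indecomposable_on_tree =
  fixes I :: "'v set" and E :: "'e set" and src tgt :: "'e \<Rightarrow> 'v" and R :: "('v, 'e, 'a) rep"
  assumes tree: "tree_quiver I E src tgt" and indec: "indecomposable I E src tgt R"
begin

abbreviation supp :: "'v set" where "supp \<equiv> dim_one_support I R"

lemma rep: "is_rep I E src tgt R"
  using indec unfolding indecomposable_def by blast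

lemma quiv: "quiver I E src tgt"
  using tree unfolding tree_quiver_def by blast

lemma space: "i \<in> I \<Longrightarrow> finite (sp R i) \<and> bp R i \<in> sp R i"
  using rep unfolding is_rep_def f1_space_def by blast

lemma morph: "h \<in> E \<Longrightarrow> f1_morph (sp R (src h)) (bp R (src h)) (sp R (tgt h)) (bp R (tgt h)) (mp R h)"
  using rep unfolding is_rep_def by blast

lemma coeff_simple_path:
  assumes "a \<in> nonzero_elems I R" and "b \<in> nonzero_elems I R"
  obtains n p e where "p 0 = a" "p n = b"
    and "\<forall>m<n. p m \<in> nonzero_elems I R \<and> e m \<in> E \<and> coeff_link src tgt R (e m) (p m) (p (Suc m))"
    and "nb_walk E src tgt n (\<lambda>m. fst (p m)) e"
proof -
  obtain n p where p: "p 0 = a" "p n = b" "\<forall>m<n. coeff_adj I E src tgt R (p m) (p (Suc m))"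
    "inj_on p {0..n}"
    by (rule rtranclp_simple_path[OF indecomposable_coeff_connected[OF indec quiv assms]])
  have loopless: "\<forall>h\<in>E. src h \<noteq> tgt h" using tree_no_loop[OF tree] by blast
  obtain e where "\<forall>m<n. e m \<in> E \<and> coeff_link src tgt R (e m) (p m) (p (Suc m))"
    "nb_walk E src tgt n (\<lambda>m. fst (p m)) e"
    by (rule coeff_path_projects[OF rep loopless p(3,4)])
  moreover have "\<forall>m<n. p m \<in> nonzero_elems I R"
    using p(3) unfolding coeff_adj_def by blast
  ultimately show ?thesis
    using that p(1,2) by blast
qed

text \<open>Two distinct nonzero elements at the same vertex would close up a non-backtracking walk.\<close>

lemma unique_nonzero:
  assumes "i \<in> I" "x \<in> sp R i" "y \<in> sp R i" "x \<noteq> bp R i" "y \<noteq> bp R i"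
  shows "x = y"
proof (rule ccontr)
  assume "x \<noteq> y"
  have "(i, x) \<in> nonzero_elems I R" "(i, y) \<in> nonzero_elems I R"
    using assms unfolding nonzero_elems_def by auto
  then obtain n p e where p: "p 0 = (i, x)" "p n = (i, y)"
    and "\<forall>m<n. p m \<in> nonzero_elems I R \<and> e m \<in> E \<and> coeff_link src tgt R (e m) (p m) (p (Suc m))"
    and walk: "nb_walk E src tgt n (\<lambda>m. fst (p m)) e"
    by (rule coeff_simple_path)
  have "1 \<le> n" using p \<open>x \<noteq> y\<close> by (cases n) auto
  then show False using tree_nb_walk_not_closed[OF tree walk] p by simp
qed

lemma nonzero_elem_in_support:
  assumes "i \<in> I" "x \<in> sp R i" "x \<noteq> bp R i"
  shows "i \<in> supp" and "nz_elem R i = x"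
proof -
  have eq: "sp R i = {bp R i, x}" using unique_nonzero[OF assms(1,2)] assms space by blast
  then show "i \<in> supp" using assms unfolding dim_one_support_def f1_dim_def by simp
  show "nz_elem R i = x"
    unfolding nz_elem_def by (rule some_equality) (use assms unique_nonzero in auto)
qed

lemma nonzero_elem_fst_in_support: "a \<in> nonzero_elems I R \<Longrightarrow> fst a \<in> supp"
  using nonzero_elem_in_support(1) unfolding nonzero_elems_def by auto

lemma space_outside_support:
  assumes "i \<in> I" "i \<notin> supp"
  shows "sp R i = {bp R i}"
  using assms space nonzero_elem_in_support(1) by blast

lemma space_on_support:
  assumes "i \<in> supp"
  shows "nz_elem R i \<noteq> bp R i" and "sp R i = {bp R i, nz_elem R i}"
proof -
  have i: "i \<in> I" "f1_dim (sp R i) \<noteq> 0" using assms unfolding dim_one_support_def by auto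
  then obtain x where "x \<in> sp R i" "x \<noteq> bp R i" using space f1_dim_nonzero_iff by metis
  then show "nz_elem R i \<noteq> bp R i" "sp R i = {bp R i, nz_elem R i}"
    using i(1) nonzero_elem_in_support(2) unique_nonzero space by blast+
qed

lemma nz_elem_nonzero:
  assumes "i \<in> supp"
  shows "(i, nz_elem R i) \<in> nonzero_elems I R"
proof -
  have "i \<in> I" using assms unfolding dim_one_support_def by blast
  then show ?thesis using space_on_support[OF assms] unfolding nonzero_elems_def by auto
qed

lemma dim_zero_or_one:
  assumes "i \<in> I"
  shows "f1_dim (sp R i) = 0 \<or> f1_dim (sp R i) = 1"
proof (cases "i \<in> supp")
  case True
  then show ?thesis unfolding dim_one_support_def by simp
next
  case False
  then show ?thesis using assms space_outside_support by (simp add: f1_dim_def)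
qed

lemma support_nonempty: "supp \<noteq> {}"
proof -
  obtain i where "i \<in> I" "f1_dim (sp R i) \<noteq> 0"
    using indec unfolding indecomposable_def rep_nonzero_def by blast
  then have "i \<in> supp" using dim_zero_or_one[of i] unfolding dim_one_support_def by auto
  then show ?thesis by blast
qed

text \<open>An edge map between one-dimensional spaces hits the nonzero element: otherwise a simple
  coefficient path from the source element to the target element, followed by the edge,
  would be a closed non-backtracking walk.\<close>

lemma edge_map_nonzero:
  assumes h: "h \<in> E" and s: "src h \<in> supp" and t: "tgt h \<in> supp"
  shows "mp R h (nz_elem R (src h)) = nz_elem R (tgt h)"
proof (rule ccontr)
  let ?x = "nz_elem R (src h)" and ?y = "nz_elem R (tgt h)"
  assume misses: "mp R h ?x \<noteq> ?y"
  from nz_elem_nonzero[OF s] nz_elem_nonzero[OF t] obtain n p e where p: "p 0 = (src h, ?x)" "p n = (tgt h, ?y)"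
    and links: "\<forall>m<n. p m \<in> nonzero_elems I R \<and> e m \<in> E \<and> coeff_link src tgt R (e m) (p m) (p (Suc m))"
    and walk: "nb_walk E src tgt n (\<lambda>m. fst (p m)) e"
    by (rule coeff_simple_path)
  have no_loop: "src h \<noteq> tgt h" using tree_no_loop[OF tree h] .
  then have "0 < n" using p by (cases n) auto
  then have n: "n - 1 < n" "Suc (n - 1) = n" by simp_all
  have "e (n - 1) \<noteq> h"
  proof
    assume last: "e (n - 1) = h"
    have "p (n - 1) \<in> nonzero_elems I R" "coeff_link src tgt R h (p (n - 1)) (p n)"
      using links n last by (metis (no_types, lifting))+
    then have "fst (p (n - 1)) = src h" "mp R h (snd (p (n - 1))) = ?y"
      "snd (p (n - 1)) \<in> sp R (src h)" "snd (p (n - 1)) \<noteq> bp R (src h)" "src h \<in> I"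
      using p(2) no_loop unfolding coeff_link_def nonzero_elems_def by auto
    moreover from calculation have "snd (p (n - 1)) = ?x"
      using nonzero_elem_in_support(2) by simp
    ultimately show False using misses by simp
  qed
  then have "nb_walk E src tgt (Suc n) ((\<lambda>m. fst (p m))(Suc n := src h)) (e(n := h))"
    by (intro nb_walk_snoc[OF walk h]) (use p(2) in auto)
  from tree_nb_walk_not_closed[OF tree this] show False
    using p(1) by simp
qed

lemma edge_iso:
  assumes "h \<in> E" "src h \<in> supp" "tgt h \<in> supp"
  shows "f1_iso (sp R (src h)) (bp R (src h)) (sp R (tgt h)) (bp R (tgt h)) (mp R h)"
proof -
  have base: "mp R h (bp R (src h)) = bp R (tgt h)"
    using morph[OF assms(1)] unfolding f1_morph_def by blast
  have "inj_on (mp R h) {bp R (src h), nz_elem R (src h)}"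
    using base edge_map_nonzero[OF assms] space_on_support(1)[OF assms(3)] by (auto simp: inj_on_def)
  then have "bij_betw (mp R h) {bp R (src h), nz_elem R (src h)} {bp R (tgt h), nz_elem R (tgt h)}"
    using base edge_map_nonzero[OF assms] unfolding bij_betw_def by simp
  then show ?thesis
    using morph[OF assms(1)] space_on_support(2)[OF assms(2)] space_on_support(2)[OF assms(3)]
    unfolding f1_iso_def by simp
qed

lemma edge_iso_dim_one:
  assumes "h \<in> E" "f1_dim (sp R (src h)) = 1" "f1_dim (sp R (tgt h)) = 1"
  shows "f1_iso (sp R (src h)) (bp R (src h)) (sp R (tgt h)) (bp R (tgt h)) (mp R h)"
proof (rule edge_iso[OF assms(1)])
  have "src h \<in> I" "tgt h \<in> I" using quiv assms(1) unfolding quiver_def by auto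
  then show "src h \<in> supp" "tgt h \<in> supp"
    using assms(2,3) unfolding dim_one_support_def by auto
qed

lemma edge_map_normal_form:
  assumes h: "h \<in> E" and x: "x \<in> sp R (src h)"
  shows "mp R h x = (if x \<noteq> bp R (src h) \<and> tgt h \<in> supp then nz_elem R (tgt h) else bp R (tgt h))"
proof (cases "x = bp R (src h)")
  case True
  then show ?thesis using morph[OF h] unfolding f1_morph_def by simp
next
  case False
  have ends: "src h \<in> I" "tgt h \<in> I" using quiv h unfolding quiver_def by auto
  have s: "src h \<in> supp" "x = nz_elem R (src h)"
    using nonzero_elem_in_support[OF ends(1) x False] by simp_all
  show ?thesis
  proof (cases "tgt h \<in> supp")
    case True
    then show ?thesis using edge_map_nonzero[OF h s(1)] s(2) False by simp
  next
    case outside: False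
    have "mp R h x \<in> sp R (tgt h)" using morph[OF h] x unfolding f1_morph_def by blast
    then show ?thesis using space_outside_support[OF ends(2) outside] outside by simp
  qed
qed

text \<open>The support is connected: a coefficient path projects to a path through the support.\<close>

lemma support_connected: "connected_in E src tgt supp"
proof -
  have project: "(adj_in E src tgt supp)\<^sup>*\<^sup>* (fst a) (fst b)"
    if "(coeff_adj I E src tgt R)\<^sup>*\<^sup>* a b" for a b
    using that
  proof (induction rule: rtranclp_induct)
    case (step b c)
    then obtain h where h: "h \<in> E" "coeff_link src tgt R h b c"
      and "b \<in> nonzero_elems I R" "c \<in> nonzero_elems I R" unfolding coeff_adj_def by blast
    then have "fst b \<in> supp" "fst c \<in> supp" by (simp_all add: nonzero_elem_fst_in_support)
    moreover have "(src h = fst b \<and> tgt h = fst c) \<or> (src h = fst c \<and> tgt h = fst b)"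
      using h(2) unfolding coeff_link_def by auto
    ultimately have "adj_in E src tgt supp (fst b) (fst c)"
      using h(1) unfolding adj_in_def by blast
    then show ?case using step.IH by simp
  qed simp
  show ?thesis unfolding connected_in_def
  proof (intro ballI)
    fix u w assume "u \<in> supp" "w \<in> supp"
    then have "(u, nz_elem R u) \<in> nonzero_elems I R" "(w, nz_elem R w) \<in> nonzero_elems I R"
      using nz_elem_nonzero by blast+
    from project[OF indecomposable_coeff_connected[OF indec quiv this]]
    show "(adj_in E src tgt supp)\<^sup>*\<^sup>* u w" by simp
  qed
qed

end

lemma indecomposables_iso:
  fixes R :: "('v, 'e, 'a) rep" and R' :: "('v, 'e, 'b) rep"
  assumes tree: "tree_quiver I E src tgt"
    and ind: "indecomposable I E src tgt R" and ind': "indecomposable I E src tgt R'"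
    and same_supp: "dim_one_support I R = dim_one_support I R'"
  shows "rep_iso I E src tgt R R'"
proof -
  interpret A: indecomposable_on_tree I E src tgt R using tree ind by unfold_locales
  interpret B: indecomposable_on_tree I E src tgt R' using tree ind' by unfold_locales
  define \<phi> :: "'v \<Rightarrow> 'a \<Rightarrow> 'b" where
    "\<phi> i x = (if x = bp R i then bp R' i else nz_elem R' i)" for i x
  have "f1_iso (sp R i) (bp R i) (sp R' i) (bp R' i) (\<phi> i)" if i: "i \<in> I" for i
  proof (cases "i \<in> A.supp")
    case True
    then have "nz_elem R i \<noteq> bp R i" "sp R i = {bp R i, nz_elem R i}"
      "nz_elem R' i \<noteq> bp R' i" "sp R' i = {bp R' i, nz_elem R' i}"
      using A.space_on_support B.space_on_support same_supp by auto
    then show ?thesis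
      unfolding f1_iso_def f1_morph_def bij_betw_def inj_on_def \<phi>_def by auto
  next
    case False
    then have "sp R i = {bp R i}" "sp R' i = {bp R' i}"
      using A.space_outside_support B.space_outside_support i same_supp by auto
    then show ?thesis
      unfolding f1_iso_def f1_morph_def bij_betw_def \<phi>_def by auto
  qed
  moreover have "\<phi> (tgt h) (mp R h x) = mp R' h (\<phi> (src h) x)"
    if h: "h \<in> E" and x: "x \<in> sp R (src h)" for h x
  proof (cases "x = bp R (src h)")
    case True
    have "bp R' (src h) \<in> sp R' (src h)" using B.space B.quiv h unfolding quiver_def by blast
    then show ?thesis
      using True A.edge_map_normal_form[OF h x] B.edge_map_normal_form[OF h] unfolding \<phi>_def by simp
  next
    case False
    have "src h \<in> A.supp"
      using A.nonzero_elem_in_support(1) A.quiv h x False unfolding quiver_def by blast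
    then have s': "nz_elem R' (src h) \<in> sp R' (src h)" "nz_elem R' (src h) \<noteq> bp R' (src h)"
      using B.space_on_support same_supp by auto
    have "mp R h x = (if tgt h \<in> A.supp then nz_elem R (tgt h) else bp R (tgt h))"
      using A.edge_map_normal_form[OF h x] False by simp
    moreover have "mp R' h (nz_elem R' (src h)) =
        (if tgt h \<in> A.supp then nz_elem R' (tgt h) else bp R' (tgt h))"
      using B.edge_map_normal_form[OF h s'(1)] s'(2) same_supp by simp
    moreover have "nz_elem R (tgt h) \<noteq> bp R (tgt h)" if "tgt h \<in> A.supp"
      using A.space_on_support that by blast
    ultimately show ?thesis using False unfolding \<phi>_def by auto
  qed
  ultimately show ?thesis unfolding rep_iso_def by blast
qed

definition canonical_rep :: "'v set \<Rightarrow> ('e \<Rightarrow> 'v) \<Rightarrow> ('e \<Rightarrow> 'v) \<Rightarrow> ('v, 'e, bool) rep" where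
  "canonical_rep S src tgt =
     \<lparr>sp = (\<lambda>i. if i \<in> S then {False, True} else {False}), bp = (\<lambda>i. False),
      mp = (\<lambda>h x. if src h \<in> S \<and> tgt h \<in> S then x else False)\<rparr>"

lemma canonical_rep_support:
  "S \<subseteq> I \<Longrightarrow> dim_one_support I (canonical_rep S src tgt) = S"
  unfolding dim_one_support_def f1_dim_def canonical_rep_def by auto

text \<open>Its coefficient graph is the subgraph spanned by S, so it is connected, and a direct
  sum decomposition would have to put all of it into one summand.\<close>

lemma canonical_rep_indecomposable:
  assumes quiv: "quiver I E src tgt" and S: "S \<subseteq> I" "S \<noteq> {}"
    and conn: "connected_in E src tgt S"
  shows "indecomposable I E src tgt (canonical_rep S src tgt)"
proof -
  let ?R = "canonical_rep S src tgt"
  have rep: "is_rep I E src tgt ?R"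
    unfolding is_rep_def f1_space_def f1_morph_def canonical_rep_def by auto
  have nonzero: "rep_nonzero I ?R"
    using S unfolding rep_nonzero_def f1_dim_def canonical_rep_def by auto
  have True_at: "i \<in> S" "x = True" if "i \<in> I" "x \<in> sp U i" "x \<noteq> False"
    and ds: "is_direct_sum I E src tgt ?R U W" for i x U W
  proof -
    have "sp U i \<subseteq> sp ?R i" using ds that(1) unfolding is_direct_sum_def by blast
    then show "i \<in> S" "x = True" using that by (auto simp: canonical_rep_def split: if_splits)
  qed
  have split_impossible: False
    if U: "rep_nonzero I U" and W: "rep_nonzero I W" and ds: "is_direct_sum I E src tgt ?R U W"
    for U W
  proof -
    obtain i x where i: "i \<in> I" "x \<in> sp U i" "x \<noteq> bp ?R i"
      using direct_sum_nonzero_elem[OF ds U] .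
    obtain j y where j: "j \<in> I" "y \<in> sp W j" "y \<noteq> bp ?R j"
      using direct_sum_nonzero_elem[OF direct_sum_commute[OF ds] W] .
    have "True \<in> sp U v" if "(adj_in E src tgt S)\<^sup>*\<^sup>* i v" for v
      using that
    proof (induction rule: rtranclp_induct)
      case base
      then show ?case using True_at[OF i(1,2) _ ds] i(2,3) by (simp add: canonical_rep_def)
    next
      case (step u v)
      then have "coeff_adj I E src tgt ?R (u, True) (v, True)"
        using S(1) unfolding adj_in_def coeff_adj_def coeff_link_def nonzero_elems_def
        by (auto simp: canonical_rep_def)
      then show ?case using direct_sum_adj_closed[OF ds] step.IH by fastforce
    qed
    moreover have "i \<in> S" "j \<in> S" "y = True"
      using True_at[OF i(1,2) _ ds] True_at[OF j(1,2) _ direct_sum_commute[OF ds]] i(3) j(3)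
      by (auto simp: canonical_rep_def)
    ultimately have "True \<in> sp U j \<inter> sp W j" using conn j(2) unfolding connected_in_def by blast
    then show False using ds j(1) unfolding is_direct_sum_def by (auto simp: canonical_rep_def)
  qed
  show ?thesis unfolding indecomposable_def using rep nonzero split_impossible by blast
qed

corollary canonical_rep_realizes:
  assumes "quiver I E src tgt" and "S \<subseteq> I" "S \<noteq> {}" and "connected_in E src tgt S"
  shows "indecomposable I E src tgt (canonical_rep S src tgt) \<and>
    dim_one_support I (canonical_rep S src tgt) = S"
  using canonical_rep_indecomposable[OF assms] canonical_rep_support[OF assms(2)] by blast

theorem mainTheorem7:
  fixes I :: "'v set" and E :: "'e set" and src tgt :: "'e \<Rightarrow> 'v"
  assumes tree: "tree_quiver I E src tgt"
  shows
    \<comment> \<open>structure of an indecomposable representation\<close>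
    "(\<forall>R :: ('v, 'e, 'a) rep. indecomposable I E src tgt R \<longrightarrow>
        (\<forall>i\<in>I. f1_dim (sp R i) = 0 \<or> f1_dim (sp R i) = 1) \<and>
        connected_in E src tgt (dim_one_support I R) \<and>
        (\<forall>h\<in>E. f1_dim (sp R (src h)) = 1 \<and> f1_dim (sp R (tgt h)) = 1 \<longrightarrow>
              f1_iso (sp R (src h)) (bp R (src h)) (sp R (tgt h)) (bp R (tgt h)) (mp R h)))
     \<and>
     \<comment> \<open>bijection: iso classes of indecomposables <-> nonempty connected subgraphs\<close>
     (\<forall>R :: ('v, 'e, 'a) rep. indecomposable I E src tgt R \<longrightarrow>
        dim_one_support I R \<noteq> {})
     \<and>
     (\<forall>S. S \<subseteq> I \<and> S \<noteq> {} \<and> connected_in E src tgt S \<longrightarrow>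
        (\<exists>R :: ('v, 'e, bool) rep. indecomposable I E src tgt R \<and> dim_one_support I R = S))
     \<and>
     (\<forall>(R :: ('v, 'e, 'a) rep) (R' :: ('v, 'e, 'b) rep).
        indecomposable I E src tgt R \<and> indecomposable I E src tgt R' \<and>
        dim_one_support I R = dim_one_support I R' \<longrightarrow> rep_iso I E src tgt R R')"
proof (intro conjI allI impI)
  fix R :: "('v, 'e, 'a) rep"
  assume "indecomposable I E src tgt R"
  then interpret indecomposable_on_tree I E src tgt R
    using tree by unfold_locales
  show "\<forall>i\<in>I. f1_dim (sp R i) = 0 \<or> f1_dim (sp R i) = 1" using dim_zero_or_one by blast
  show "connected_in E src tgt supp" by (rule support_connected)
  show "\<forall>h\<in>E. f1_dim (sp R (src h)) = 1 \<and> f1_dim (sp R (tgt h)) = 1 \<longrightarrow>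
      f1_iso (sp R (src h)) (bp R (src h)) (sp R (tgt h)) (bp R (tgt h)) (mp R h)"
    using edge_iso_dim_one by blast
next
  fix R :: "('v, 'e, 'a) rep"
  assume "indecomposable I E src tgt R"
  then interpret indecomposable_on_tree I E src tgt R
    using tree by unfold_locales
  show "supp \<noteq> {}" by (rule support_nonempty)
next
  fix S assume "S \<subseteq> I \<and> S \<noteq> {} \<and> connected_in E src tgt S"
  then show "\<exists>R :: ('v, 'e, bool) rep. indecomposable I E src tgt R \<and> dim_one_support I R = S"
    using canonical_rep_realizes tree unfolding tree_quiver_def by blast
next
  fix R :: "('v, 'e, 'a) rep" and R' :: "('v, 'e, 'b) rep"
  assume "indecomposable I E src tgt R \<and> indecomposable I E src tgt R' \<and>
      dim_one_support I R = dim_one_support I R'"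
  then show "rep_iso I E src tgt R R'" using indecomposables_iso[OF tree] by blast
qed

end
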